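(* Let $\mathcal B=(\mathcal L,\mathcal R,\omega,\lambda,\rho)$ be a bimachine realizing a transduction $f$. Then $\mathcal L\sqsubseteq \mathit{Left}_f(\mathcal R)$ and $\mathcal R\sqsubseteq\mathit{Right}_f(\mathcal L)$.
   Context: Notation: for words $u\preceq v$ (prefix), $u^{-1}v$ is the word $v'$ with $uv'=v$; $\bigwedge L$ is the longest common prefix of the words of $L$ ($\bigwedge\emptyset=\varepsilon$). A transduction is a partial function $f:\Sigma^*\to\Sigma^*$. A (left) automaton here is a complete deterministic automaton $\mathcal L$ with initial state $l_0$; $[u]_{\mathcal L}$ denotes the state reached from $l_0$ on $u$, and $u\sim_{\mathcal L}v$ iff $[u]_{\mathcal L}=[v]_{\mathcal L}$. A right automaton $\mathcal R=(Q,\Delta,\{r_0\},F)$ is an automaton that is backward deterministic and backward complete (for each $q,\sigma$ there is exactly one $p$ with $(p,\sigma,q)\in\Delta$); it reads words right to left: $[u]_{\mathcal R}$ is the unique state $p$ with a run on $u$ from $p$ to $r_0$, $u$ is accepted iff $[u]_{\mathcal R}\in F$, and $u\sim_{\mathcal R}v$ iff $[u]_{\mathcal R}=[v]_{\mathcal R}$. For two left (resp. right) automata, $\mathcal A_1\sqsubseteq\mathcal A_2$ means $u\sim_{\mathcal A_1}v\Rightarrow u\sim_{\mathcal A_2}v$. A bimachine $\mathcal B=(\mathcal L,\mathcal R,\omega,\lambda,\rho)$ consists of a left automaton $\mathcal L$ (states $Q_{\mathcal L}$, finals $F_{\mathcal L}$) and a right automaton $\mathcal R$ (states $Q_{\mathcal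 R}$, finals $F_{\mathcal R}$) accepting the same language, $\omega:Q_{\mathcal L}\times\Sigma\times Q_{\mathcal R}\to\Sigma^*$, $\lambda:F_{\mathcal R}\to\Sigma^*$, $\rho:F_{\mathcal L}\to\Sigma^*$. It realizes the transduction with domain the accepted language and $u\mapsto\lambda([u]_{\mathcal R})\,\omega([u[1..0]]_{\mathcal L},u[1],[u[2..n]]_{\mathcal R})\cdots\omega([u[1..n-1]]_{\mathcal L},u[n],[\varepsilon]_{\mathcal R})\,\rho([u]_{\mathcal L})$ where $n=|u|$. Left minimization: given $f$ and a right automaton $\mathcal R$ with accepted language $\mathrm{dom}(f)$, let $\widehat f_{[w]_{\mathcal R}}(u)=\bigwedge\{f(uv)\mid v\sim_{\mathcal R}w,\ uv\in\mathrm{dom}(f)\}$, and define $u\sim_L v$ iff for all $w$: $uw\in\mathrm{dom}(f)\Leftrightarrow vw\in\mathrm{dom}(f)$, and if $uw\in\mathrm{dom}(f)$ then $\widehat f_{[w]_{\mathcal R}}(u)^{-1}f(uw)=\widehat f_{[w]_{\mathcal R}}(v)^{-1}f(vw)$. This is a right congruence; $\mathit{Left}_f(\mathcal R)$ is the deterministic automaton with states $\Sigma^*/{\sim_L}$, transitions $([u],\sigma,[u\sigma])$, initial state $[\varepsilon]$ and final states $\{[u]\mid u\in\mathrm{dom}(f)\}$. $\mathit{Right}_f(\mathcal L)$ is defined symmetrically (mirror construction): it is the right automaton obtained by applying $\mathit{Left}$ to the mirrored transduction $w\mapsto \overline{f(\overline w)}$ (where $\overline{x}$ is the mirror image of $x$)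 and the mirror of $\mathcal L$, and mirroring the result back. *)

theory Defs
  imports Main "HOL-Library.Sublist"
begin

text \<open>Longest common prefix of a set of words (the greatest lower bound in the
  prefix order); by convention it is the empty word for the empty set.\<close>
definition lcp :: "'a list set \<Rightarrow> 'a list" where
  "lcp L = (if L = {} then []
            else (THE w. (\<forall>x\<in>L. prefix w x) \<and> (\<forall>w'. (\<forall>x\<in>L. prefix w' x) \<longrightarrow> prefix w' w)))"

text \<open>Residual u^{-1} v (only used when u is a prefix of v).\<close>
definition lquot :: "'a list \<Rightarrow> 'a list \<Rightarrow> 'a list" where
  "lquot u v = drop (length u) v"

record ('s, 'a) left_aut =
  lstates :: "'s set"
  ltrans  :: "'s \<Rightarrow> 'a \<Rightarrow> 's"
  linit   :: 's
  lfinal  :: "'s set"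

definition left_automaton :: "('s, 'a) left_aut \<Rightarrow> bool" where
  "left_automaton A \<longleftrightarrow> finite (lstates A) \<and> linit A \<in> lstates A \<and> lfinal A \<subseteq> lstates A
     \<and> (\<forall>q\<in>lstates A. \<forall>\<sigma>. ltrans A q \<sigma> \<in> lstates A)"

definition lstate :: "('s, 'a) left_aut \<Rightarrow> 'a list \<Rightarrow> 's" where
  "lstate A u = foldl (ltrans A) (linit A) u"

text \<open>A right automaton: backward deterministic and backward complete, so the
  transition relation is given by a function: rtrans A q \<sigma> is the unique p with
  (p, \<sigma>, q) a transition.\<close>
record ('s, 'a) right_aut =
  rstates :: "'s set"
  rtrans  :: "'s \<Rightarrow> 'a \<Rightarrow> 's"
  rinit   :: 's
  rfinal  :: "'s set"

definition right_automaton :: "('s, 'a) right_aut \<Rightarrow> bool" where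
  "right_automaton A \<longleftrightarrow> finite (rstates A) \<and> rinit A \<in> rstates A \<and> rfinal A \<subseteq> rstates A
     \<and> (\<forall>q\<in>rstates A. \<forall>\<sigma>. rtrans A q \<sigma> \<in> rstates A)"

text \<open>[u]_R: the unique state p with a run on u from p to the initial state r0
  (the word is read right to left).\<close>
definition rstate :: "('s, 'a) right_aut \<Rightarrow> 'a list \<Rightarrow> 's" where
  "rstate A u = foldr (\<lambda>\<sigma> q. rtrans A q \<sigma>) u (rinit A)"

definition left_refines :: "('s, 'a) left_aut \<Rightarrow> ('t, 'a) left_aut \<Rightarrow> bool" where
  "left_refines A1 A2 \<longleftrightarrow> (\<forall>u v. lstate A1 u = lstate A1 v \<longrightarrow> lstate A2 u = lstate A2 v)"

definition right_refines :: "('s, 'a) right_aut \<Rightarrow> ('t, 'a) right_aut \<Rightarrow> bool" where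
  "right_refines A1 A2 \<longleftrightarrow> (\<forall>u v. rstate A1 u = rstate A1 v \<longrightarrow> rstate A2 u = rstate A2 v)"

definition bm_output ::
  "('l, 'a) left_aut \<Rightarrow> ('r, 'a) right_aut \<Rightarrow> ('l \<Rightarrow> 'a \<Rightarrow> 'r \<Rightarrow> 'a list)
    \<Rightarrow> ('r \<Rightarrow> 'a list) \<Rightarrow> ('l \<Rightarrow> 'a list) \<Rightarrow> 'a list \<Rightarrow> 'a list" where
  "bm_output L R \<omega> lam \<rho> u =
     lam (rstate R u)
     @ concat (map (\<lambda>i. \<omega> (lstate L (take i u)) (u ! i) (rstate R (drop (Suc i) u))) [0..<length u])
     @ \<rho> (lstate L u)"

text \<open>(L, R, \<omega>, \<lambda>, \<rho>) is a bimachine realizing f.  The functions \<omega>, \<lambda>, \<rho> are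
  total here but only their values on Q_L x \<Sigma> x Q_R, F_R, F_L matter.\<close>
definition bimachine_realizes ::
  "('l, 'a) left_aut \<Rightarrow> ('r, 'a) right_aut \<Rightarrow> ('l \<Rightarrow> 'a \<Rightarrow> 'r \<Rightarrow> 'a list)
    \<Rightarrow> ('r \<Rightarrow> 'a list) \<Rightarrow> ('l \<Rightarrow> 'a list) \<Rightarrow> ('a list \<Rightarrow> 'a list option) \<Rightarrow> bool" where
  "bimachine_realizes L R \<omega> lam \<rho> f \<longleftrightarrow>
     left_automaton L \<and> right_automaton R
     \<and> (\<forall>u. lstate L u \<in> lfinal L \<longleftrightarrow> rstate R u \<in> rfinal R)
     \<and> (\<forall>u. f u = (if lstate L u \<in> lfinal L then Some (bm_output L R \<omega> lam \<rho> u) else None))"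

definition fhat :: "('a list \<Rightarrow> 'a list option) \<Rightarrow> ('s, 'a) right_aut \<Rightarrow> 'a list \<Rightarrow> 'a list \<Rightarrow> 'a list" where
  "fhat f R w u = lcp {the (f (u @ v)) | v. rstate R v = rstate R w \<and> u @ v \<in> dom f}"

definition left_rel :: "('a list \<Rightarrow> 'a list option) \<Rightarrow> ('s, 'a) right_aut \<Rightarrow> 'a list \<Rightarrow> 'a list \<Rightarrow> bool" where
  "left_rel f R u v \<longleftrightarrow> (\<forall>w. (u @ w \<in> dom f \<longleftrightarrow> v @ w \<in> dom f)
      \<and> (u @ w \<in> dom f \<longrightarrow>
           lquot (fhat f R w u) (the (f (u @ w))) = lquot (fhat f R w v) (the (f (v @ w)))))"

definition left_class :: "('a list \<Rightarrow> 'a list option) \<Rightarrow> ('s, 'a) right_aut \<Rightarrow> 'a list \<Rightarrow> 'a list set" where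
  "left_class f R u = {v. left_rel f R u v}"

definition Left_aut :: "('a list \<Rightarrow> 'a list option) \<Rightarrow> ('s, 'a) right_aut \<Rightarrow> ('a list set, 'a) left_aut" where
  "Left_aut f R =
     \<lparr> lstates = range (left_class f R),
       ltrans = (\<lambda>X \<sigma>. left_class f R ((SOME u. u \<in> X) @ [\<sigma>])),
       linit = left_class f R [],
       lfinal = {left_class f R u | u. u \<in> dom f} \<rparr>"

definition mirror_trans :: "('a list \<Rightarrow> 'a list option) \<Rightarrow> ('a list \<Rightarrow> 'a list option)" where
  "mirror_trans f = (\<lambda>w. map_option rev (f (rev w)))"

text \<open>The mirror of a left automaton is a right automaton and vice versa; the
  components are unchanged, only the reading direction is swapped.\<close>
definition mirror_left :: "('s, 'a) left_aut \<Rightarrow> ('s, 'a) right_aut" where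
  "mirror_left A = \<lparr> rstates = lstates A, rtrans = ltrans A, rinit = linit A, rfinal = lfinal A \<rparr>"

definition Right_aut :: "('a list \<Rightarrow> 'a list option) \<Rightarrow> ('s, 'a) left_aut \<Rightarrow> ('a list set, 'a) right_aut" where
  "Right_aut f L = mirror_left (Left_aut (mirror_trans f) (mirror_left L))"

end

theory Submission
  imports Defs
begin

text \<open>In a bimachine the output on \<open>u @ w\<close> splits into a part determined by \<open>u\<close> and
  \<open>[w]\<^sub>R\<close>, followed by a part determined by \<open>[u]\<^sub>L\<close> and \<open>w\<close>.  Hence all outputs
  \<open>f (u @ v)\<close> with \<open>v ~\<^sub>R w\<close> share the first part, which is absorbed into the common prefix
  \<open>fhat f R w u\<close>; what remains after cancelling it depends on \<open>u\<close> only through \<open>[u]\<^sub>L\<close>.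
  So \<open>[u]\<^sub>L = [v]\<^sub>L\<close> forces \<open>u ~\<^sub>L v\<close>.  The statement about \<open>Right\<^sub>f(L)\<close> is the same
  argument on reversed words, with the roles of the two parts exchanged.\<close>

lemma lcp_eq_Longest_common_prefix:
  assumes "L \<noteq> {}"
  shows "lcp L = Longest_common_prefix L"
  unfolding lcp_def using assms
  by (simp, intro the_equality)
     (auto intro: Longest_common_prefix_prefix Longest_common_prefix_max_prefix prefix_order.antisym)

lemma lcp_prefix:
  assumes "x \<in> L"
  shows "prefix (lcp L) x"
proof -
  have "L \<noteq> {}" using assms by blast
  with assms show ?thesis by (simp add: lcp_eq_Longest_common_prefix Longest_common_prefix_prefix)
qed

lemma lcp_image_append:
  assumes "L \<noteq> {}"
  shows "lcp ((@) h ` L) = h @ lcp L"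
proof -
  have "Longest_common_prefix ((@) h ` L) = h @ Longest_common_prefix L"
  proof (induction h)
    case (Cons a h)
    have "(@) (a # h) ` L = (#) a ` ((@) h ` L)" by auto
    with Cons assms show ?case by (simp add: Longest_common_prefix_image_Cons)
  qed simp
  with assms show ?thesis by (simp add: lcp_eq_Longest_common_prefix)
qed

definition left_residual ::
  "('a list \<Rightarrow> 'a list option) \<Rightarrow> ('s, 'a) right_aut \<Rightarrow> 'a list \<Rightarrow> 'a list \<Rightarrow> 'a list" where
  "left_residual f R u w = lquot (fhat f R w u) (the (f (u @ w)))"

lemma left_rel_iff_residual:
  "left_rel f R u v \<longleftrightarrow> (\<forall>w. (u @ w \<in> dom f \<longleftrightarrow> v @ w \<in> dom f)
      \<and> (u @ w \<in> dom f \<longrightarrow> left_residual f R u w = left_residual f R v w))"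
  by (simp add: left_rel_def left_residual_def)

lemma fhat_cong: "rstate R w = rstate R w' \<Longrightarrow> fhat f R w u = fhat f R w' u"
  unfolding fhat_def by simp

lemma fhat_append_left_residual:
  assumes "u @ w \<in> dom f"
  shows "the (f (u @ w)) = fhat f R w u @ left_residual f R u w"
proof -
  have "prefix (fhat f R w u) (the (f (u @ w)))"
    unfolding fhat_def using assms by (auto intro: lcp_prefix)
  thus ?thesis by (auto simp: prefix_def left_residual_def lquot_def)
qed

lemma left_residual_factor:
  assumes dom: "x @ w \<in> dom f"
    and out: "\<And>v. rstate R v = rstate R w \<Longrightarrow> x @ v \<in> dom f \<Longrightarrow> the (f (x @ v)) = h @ g v"
  shows "left_residual f R x w
    = lquot (lcp {g v | v. rstate R v = rstate R w \<and> x @ v \<in> dom f}) (g w)"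
proof -
  let ?C = "{v. rstate R v = rstate R w \<and> x @ v \<in> dom f}"
  have G: "{g v | v. rstate R v = rstate R w \<and> x @ v \<in> dom f} = g ` ?C" by blast
  have "{the (f (x @ v)) | v. rstate R v = rstate R w \<and> x @ v \<in> dom f} = (\<lambda>v. the (f (x @ v))) ` ?C"
    by blast
  also have "\<dots> = (@) h ` g ` ?C"
    unfolding image_image by (rule image_cong) (simp_all add: out)
  finally have "fhat f R w x = lcp ((@) h ` g ` ?C)"
    unfolding fhat_def by (rule arg_cong)
  also have "\<dots> = h @ lcp (g ` ?C)"
    using dom by (intro lcp_image_append) blast
  finally have "fhat f R w x = h @ lcp (g ` ?C)" .
  with out[OF refl dom] show ?thesis
    unfolding G left_residual_def lquot_def by simp
qed

lemma left_rel_refl: "left_rel f R u u"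
  unfolding left_rel_def by simp

lemma left_rel_sym: "left_rel f R u v \<Longrightarrow> left_rel f R v u"
  unfolding left_rel_def by metis

lemma left_rel_trans: "left_rel f R u v \<Longrightarrow> left_rel f R v x \<Longrightarrow> left_rel f R u x"
  unfolding left_rel_def by metis

lemma rstate_Cons: "rstate R (\<sigma> # w) = rtrans R (rstate R w) \<sigma>"
  unfolding rstate_def by simp

lemma left_rel_append_letter:
  assumes uv: "left_rel f R u v"
  shows "left_rel f R (u @ [\<sigma>]) (v @ [\<sigma>])"
  unfolding left_rel_iff_residual
proof (intro allI conjI impI)
  fix w
  have dom_uv: "\<And>w. u @ w \<in> dom f \<longleftrightarrow> v @ w \<in> dom f"
    and res_uv: "\<And>w. u @ w \<in> dom f \<Longrightarrow> left_residual f R u w = left_residual f R v w"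
    using uv unfolding left_rel_iff_residual by blast+
  show "(u @ [\<sigma>]) @ w \<in> dom f \<longleftrightarrow> (v @ [\<sigma>]) @ w \<in> dom f"
    using dom_uv[of "\<sigma> # w"] by simp
  assume dom_w: "(u @ [\<sigma>]) @ w \<in> dom f"
  have residual_x: "left_residual f R (x @ [\<sigma>]) w = lquot (lcp {left_residual f R x (\<sigma> # v') | v'.
        rstate R v' = rstate R w \<and> (x @ [\<sigma>]) @ v' \<in> dom f}) (left_residual f R x (\<sigma> # w))"
    if "(x @ [\<sigma>]) @ w \<in> dom f" for x
  proof (rule left_residual_factor[OF that])
    fix v' assume "rstate R v' = rstate R w" "(x @ [\<sigma>]) @ v' \<in> dom f"
    then show "the (f ((x @ [\<sigma>]) @ v')) = fhat f R (\<sigma> # w) x @ left_residual f R x (\<sigma> # v')"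
      using fhat_append_left_residual[of x "\<sigma> # v'" f R] fhat_cong[of R "\<sigma> # v'" "\<sigma> # w"]
      by (simp add: rstate_Cons)
  qed
  have residual_sets: "{left_residual f R u (\<sigma> # v') | v'. rstate R v' = rstate R w \<and> (u @ [\<sigma>]) @ v' \<in> dom f}
      = {left_residual f R v (\<sigma> # v') | v'. rstate R v' = rstate R w \<and> (v @ [\<sigma>]) @ v' \<in> dom f}"
    by (intro Collect_cong ex_cong1) (use dom_uv res_uv in \<open>auto simp: domIff\<close>)
  have dom_vw: "(v @ [\<sigma>]) @ w \<in> dom f" using dom_w dom_uv[of "\<sigma> # w"] by simp
  have "left_residual f R u (\<sigma> # w) = left_residual f R v (\<sigma> # w)"
    using dom_w res_uv[of "\<sigma> # w"] by simp
  then show "left_residual f R (u @ [\<sigma>]) w = left_residual f R (v @ [\<sigma>]) w"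
    by (simp only: residual_x[OF dom_w] residual_x[OF dom_vw] residual_sets)
qed

lemma left_class_eq_iff: "left_class f R u = left_class f R v \<longleftrightarrow> left_rel f R u v"
proof
  assume "left_class f R u = left_class f R v"
  moreover have "v \<in> left_class f R v" by (simp add: left_class_def left_rel_refl)
  ultimately have "v \<in> left_class f R u" by simp
  then show "left_rel f R u v" by (simp add: left_class_def)
next
  assume "left_rel f R u v"
  then show "left_class f R u = left_class f R v"
    unfolding left_class_def using left_rel_sym left_rel_trans by blast
qed

lemma lstate_Left_aut: "lstate (Left_aut f R) u = left_class f R u"
proof (induction u rule: rev_induct)
  case Nil
  show ?case by (simp add: lstate_def Left_aut_def)
next
  case (snoc \<sigma> u)
  have "u \<in> left_class f R u" by (simp add: left_class_def left_rel_refl)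
  hence "(SOME x. x \<in> left_class f R u) \<in> left_class f R u" by (rule someI)
  hence "left_rel f R u (SOME x. x \<in> left_class f R u)" by (simp add: left_class_def)
  hence "left_rel f R ((SOME x. x \<in> left_class f R u) @ [\<sigma>]) (u @ [\<sigma>])"
    by (rule left_rel_append_letter[OF left_rel_sym])
  hence "left_class f R ((SOME x. x \<in> left_class f R u) @ [\<sigma>]) = left_class f R (u @ [\<sigma>])"
    unfolding left_class_eq_iff .
  with snoc show ?case by (simp add: lstate_def Left_aut_def)
qed

lemma left_rel_if_output_factors:
  assumes dom: "\<And>x w. x @ w \<in> dom f \<longleftrightarrow> D (s x) w"
    and out: "\<And>x w. x @ w \<in> dom f \<Longrightarrow> the (f (x @ w)) = A x (rstate R w) @ B (s x) w"
    and suv: "s u = s v"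
  shows "left_rel f R u v"
  unfolding left_rel_iff_residual
proof (intro allI conjI impI)
  fix w
  show "u @ w \<in> dom f \<longleftrightarrow> v @ w \<in> dom f" using dom suv by simp
  assume dom_w: "u @ w \<in> dom f"
  have residual_x: "left_residual f R x w
      = lquot (lcp {B (s x) v' | v'. rstate R v' = rstate R w \<and> x @ v' \<in> dom f}) (B (s x) w)"
    if "x @ w \<in> dom f" for x
    using that by (rule left_residual_factor[where h = "A x (rstate R w)"]) (simp add: out)
  have dom_vw: "v @ w \<in> dom f" using dom_w dom suv by simp
  have "{B (s u) v' | v'. rstate R v' = rstate R w \<and> u @ v' \<in> dom f}
      = {B (s v) v' | v'. rstate R v' = rstate R w \<and> v @ v' \<in> dom f}"
    by (simp only: dom suv)
  then show "left_residual f R u w = left_residual f R v w"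
    by (simp only: residual_x[OF dom_w] residual_x[OF dom_vw] suv)
qed

definition lrun :: "('l, 'a) left_aut \<Rightarrow> 'l \<Rightarrow> 'a list \<Rightarrow> 'l" where
  "lrun L l x = foldl (ltrans L) l x"

definition rrun :: "('r, 'a) right_aut \<Rightarrow> 'a list \<Rightarrow> 'r \<Rightarrow> 'r" where
  "rrun R x r = foldr (\<lambda>\<sigma> q. rtrans R q \<sigma>) x r"

lemma lstate_append: "lstate L (x @ y) = lrun L (lstate L x) y"
  unfolding lstate_def lrun_def by simp

lemma rstate_append: "rstate R (x @ y) = rrun R x (rstate R y)"
  unfolding rstate_def rrun_def by simp

lemma rstate_mirror_left: "rstate (mirror_left A) w = lstate A (rev w)"
  unfolding rstate_def lstate_def mirror_left_def by (simp add: foldr_conv_foldl)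

text \<open>Output while reading \<open>u\<close> when the right automaton is in state \<open>r\<close> after \<open>u\<close>, and
  output while reading \<open>w\<close> when the left automaton is in state \<open>l\<close> before \<open>w\<close>.\<close>

definition bm_prefix_output ::
  "('l, 'a) left_aut \<Rightarrow> ('r, 'a) right_aut \<Rightarrow> ('l \<Rightarrow> 'a \<Rightarrow> 'r \<Rightarrow> 'a list)
    \<Rightarrow> ('r \<Rightarrow> 'a list) \<Rightarrow> 'a list \<Rightarrow> 'r \<Rightarrow> 'a list" where
  "bm_prefix_output L R \<omega> lam u r = lam (rrun R u r) @
     concat (map (\<lambda>i. \<omega> (lstate L (take i u)) (u ! i) (rrun R (drop (Suc i) u) r)) [0..<length u])"

definition bm_suffix_output ::
  "('l, 'a) left_aut \<Rightarrow> ('r, 'a) right_aut \<Rightarrow> ('l \<Rightarrow> 'a \<Rightarrow> 'r \<Rightarrow> 'a list)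
    \<Rightarrow> ('l \<Rightarrow> 'a list) \<Rightarrow> 'l \<Rightarrow> 'a list \<Rightarrow> 'a list" where
  "bm_suffix_output L R \<omega> \<rho> l w =
     concat (map (\<lambda>j. \<omega> (lrun L l (take j w)) (w ! j) (rstate R (drop (Suc j) w))) [0..<length w])
     @ \<rho> (lrun L l w)"

lemma map_upt_add: "map g [0..<a + b] = map g [0..<a] @ map (\<lambda>j. g (a + j)) [0..<b]"
  by (induction b) auto

lemma bm_output_append:
  "bm_output L R \<omega> lam \<rho> (u @ w)
     = bm_prefix_output L R \<omega> lam u (rstate R w) @ bm_suffix_output L R \<omega> \<rho> (lstate L u) w"
proof -
  let ?step = "\<lambda>i. \<omega> (lstate L (take i (u @ w))) ((u @ w) ! i) (rstate R (drop (Suc i) (u @ w)))"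
  have prefix_steps: "map ?step [0..<length u]
      = map (\<lambda>i. \<omega> (lstate L (take i u)) (u ! i) (rrun R (drop (Suc i) u) (rstate R w))) [0..<length u]"
    by (auto simp: nth_append rstate_append)
  have suffix_steps: "map (\<lambda>j. ?step (length u + j)) [0..<length w]
      = map (\<lambda>j. \<omega> (lrun L (lstate L u) (take j w)) (w ! j) (rstate R (drop (Suc j) w))) [0..<length w]"
    by (auto simp: lstate_append)
  have "bm_output L R \<omega> lam \<rho> (u @ w) = lam (rstate R (u @ w))
      @ concat (map ?step [0..<length u]) @ concat (map (\<lambda>j. ?step (length u + j)) [0..<length w])
      @ \<rho> (lstate L (u @ w))"
    unfolding bm_output_def by (simp add: map_upt_add)
  also have "\<dots> = bm_prefix_output L R \<omega> lam u (rstate R w) @ bm_suffix_output L R \<omega> \<rho> (lstate L u) w"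
    unfolding prefix_steps suffix_steps bm_prefix_output_def bm_suffix_output_def
    by (simp add: rstate_append lstate_append)
  finally show ?thesis .
qed

lemma bimachine_dom_iff:
  assumes "bimachine_realizes L R \<omega> lam \<rho> f"
  shows "x \<in> dom f \<longleftrightarrow> lstate L x \<in> lfinal L"
    and "x \<in> dom f \<longleftrightarrow> rstate R x \<in> rfinal R"
  using assms unfolding bimachine_realizes_def by (simp_all add: domIff)

lemma bimachine_apply:
  "bimachine_realizes L R \<omega> lam \<rho> f \<Longrightarrow> x \<in> dom f \<Longrightarrow> the (f x) = bm_output L R \<omega> lam \<rho> x"
  unfolding bimachine_realizes_def by (auto simp: domIff split: if_splits)

lemma bimachine_left_refines:
  assumes B: "bimachine_realizes L R \<omega> lam \<rho> f"
  shows "left_refines L (Left_aut f R)"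
  unfolding left_refines_def lstate_Left_aut left_class_eq_iff
proof (intro allI impI)
  have dom: "x @ w \<in> dom f \<longleftrightarrow> lrun L (lstate L x) w \<in> lfinal L" for x w
    by (simp add: bimachine_dom_iff(1)[OF B] lstate_append)
  have out: "the (f (x @ w))
      = bm_prefix_output L R \<omega> lam x (rstate R w) @ bm_suffix_output L R \<omega> \<rho> (lstate L x) w"
    if "x @ w \<in> dom f" for x w
    using that by (simp add: bimachine_apply[OF B] bm_output_append)
  fix u v assume "lstate L u = lstate L v"
  with dom out show "left_rel f R u v"
    by (rule left_rel_if_output_factors[where s = "lstate L"
          and A = "bm_prefix_output L R \<omega> lam" and B = "bm_suffix_output L R \<omega> \<rho>"])
qed

lemma dom_mirror_trans: "x \<in> dom (mirror_trans f) \<longleftrightarrow> rev x \<in> dom f"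
  by (simp add: mirror_trans_def domIff)

lemma the_mirror_trans: "rev x \<in> dom f \<Longrightarrow> the (mirror_trans f x) = rev (the (f (rev x)))"
  by (auto simp: mirror_trans_def)

lemma bimachine_right_refines:
  assumes B: "bimachine_realizes L R \<omega> lam \<rho> f"
  shows "right_refines R (Right_aut f L)"
  unfolding right_refines_def Right_aut_def rstate_mirror_left lstate_Left_aut left_class_eq_iff
proof (intro allI impI)
  have dom: "x @ w \<in> dom (mirror_trans f) \<longleftrightarrow> rrun R (rev w) (rstate R (rev x)) \<in> rfinal R" for x w
    by (simp add: dom_mirror_trans bimachine_dom_iff(2)[OF B] rstate_append)
  have out: "the (mirror_trans f (x @ w))
      = rev (bm_suffix_output L R \<omega> \<rho> (rstate (mirror_left L) w) (rev x))
        @ rev (bm_prefix_output L R \<omega> lam (rev w) (rstate R (rev x)))"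
    if "x @ w \<in> dom (mirror_trans f)" for x w
    using that by (simp add: dom_mirror_trans the_mirror_trans bimachine_apply[OF B]
        bm_output_append rstate_mirror_left)
  fix u v assume "rstate R u = rstate R v"
  then have "rstate R (rev (rev u)) = rstate R (rev (rev v))" by simp
  with dom out show "left_rel (mirror_trans f) (mirror_left L) (rev u) (rev v)"
    by (rule left_rel_if_output_factors[where s = "\<lambda>x. rstate R (rev x)"
          and A = "\<lambda>x l. rev (bm_suffix_output L R \<omega> \<rho> l (rev x))"
          and B = "\<lambda>r w. rev (bm_prefix_output L R \<omega> lam (rev w) r)"])
qed

theorem proposition3p3:
  fixes L :: "('l, 'a) left_aut" and R :: "('r, 'a) right_aut"
    and \<omega> :: "'l \<Rightarrow> 'a \<Rightarrow> 'r \<Rightarrow> 'a list" and lam :: "'r \<Rightarrow> 'a list" and \<rho> :: "'l \<Rightarrow> 'a list"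
    and f :: "'a list \<Rightarrow> 'a list option"
  assumes "bimachine_realizes L R \<omega> lam \<rho> f"
  shows "left_refines L (Left_aut f R) \<and> right_refines R (Right_aut f L)"
  using bimachine_left_refines[OF assms] bimachine_right_refines[OF assms] by blast

end
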